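(* Let $X$ be a metric space, $Y$ a complete metric space, and $f_0\colon X \to Y$ an embedding such that $f_0^{-1}\colon f_0(X) \to X$ is uniformly continuous; put $Y_0 = f_0(X)$. Consider the infinite two-player game in which, for each move number $k \geq 1$: Player I chooses a number $\varepsilon_k > 0$ (possibly depending on all previous moves); then Player II chooses a map $g_k\colon Y_{k-1} \to Y$ which is an embedding, satisfies $d_Y(g_k(y), y) < \varepsilon_k$ for all $y \in Y_{k-1}$, and has uniformly continuous inverse $g_k^{-1}\colon g_k(Y_{k-1}) \to Y_{k-1}$; one then sets $f_k = g_k \circ f_{k-1}$ and $Y_k = g_k(Y_{k-1}) = f_k(X)$. Player I wins if the pointwise limit $f = \lim_{k\to\infty} f_k\colon X \to Y$ exists and is an embedding of $X$ into $Y$. Then Player I has a winning strategy.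
   Context: An embedding is a continuous injective map that is a homeomorphism onto its image. *)

theory Defs
  imports "HOL-Analysis.Analysis"
begin

definition embedding_on :: "'a::topological_space set \<Rightarrow> ('a \<Rightarrow> 'b::topological_space) \<Rightarrow> bool" where
  "embedding_on S f \<longleftrightarrow> (\<exists>g. homeomorphism S (f ` S) f g)"

text \<open>Stage maps of a play: f_0 given, f_(k+1) = g_k o f_k, where g_k is
  Player II's move number k+1 (moves are indexed from 0 here).\<close>
fun stage :: "('a \<Rightarrow> 'b) \<Rightarrow> (nat \<Rightarrow> 'b \<Rightarrow> 'b) \<Rightarrow> nat \<Rightarrow> 'a \<Rightarrow> 'b" where
  "stage f0 g 0 = f0"
| "stage f0 g (Suc k) = g k \<circ> stage f0 g k"

text \<open>The history of the first k moves of Player II, each move restricted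
  to its domain Y_j = f_j(X) (values outside the domain are irrelevant).\<close>
definition history :: "'a set \<Rightarrow> ('a \<Rightarrow> 'b) \<Rightarrow> (nat \<Rightarrow> 'b \<Rightarrow> 'b) \<Rightarrow> nat \<Rightarrow> ('b \<Rightarrow> 'b) list" where
  "history X f0 g k = map (\<lambda>j. restrict (g j) (stage f0 g j ` X)) [0..<k]"

text \<open>A play g of Player II is legal against the Player I strategy sigma
  (which maps the history of II's previous moves to epsilon).\<close>
definition legal_play :: "'a::metric_space set \<Rightarrow> ('a \<Rightarrow> 'b::metric_space) \<Rightarrow> (('b \<Rightarrow> 'b) list \<Rightarrow> real)
    \<Rightarrow> (nat \<Rightarrow> 'b \<Rightarrow> 'b) \<Rightarrow> bool" where
  "legal_play X f0 \<sigma> g \<longleftrightarrow>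
     (\<forall>k. let Yk = stage f0 g k ` X; \<epsilon> = \<sigma> (history X f0 g k) in
          embedding_on Yk (g k)
        \<and> (\<forall>y\<in>Yk. dist (g k y) y < \<epsilon>)
        \<and> uniformly_continuous_on (g k ` Yk) (inv_into Yk (g k)))"

definition player_I_wins :: "'a::metric_space set \<Rightarrow> ('a \<Rightarrow> 'b::metric_space) \<Rightarrow> (nat \<Rightarrow> 'b \<Rightarrow> 'b) \<Rightarrow> bool" where
  "player_I_wins X f0 g \<longleftrightarrow>
     (\<exists>f. (\<forall>x\<in>X. (\<lambda>k. stage f0 g k x) \<longlonglongrightarrow> f x) \<and> embedding_on X f)"

end

theory Submission
  imports Defs
begin

text \<open>Player I answers a history of \<open>k\<close> moves with
  \<open>\<epsilon>\<^sub>k = min {\<delta>\<^sub>i / 2^(k-i+3) | i \<le> k}\<close>, where \<open>\<delta>\<^sub>i\<close> is a modulus of uniform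
  continuity of \<open>f\<^sub>i\<^sup>-\<^sup>1\<close> for the accuracy \<open>2^-i\<close>.  Then \<open>d(f\<^sub>k\<^sub>+\<^sub>1, f\<^sub>k) \<le> \<delta>\<^sub>i 2^(i-k-3)\<close>
  for all \<open>i \<le> k\<close>, so \<open>f\<^sub>k\<close> converges uniformly to a continuous \<open>f\<close> with
  \<open>d(f, f\<^sub>i) \<le> \<delta>\<^sub>i/4\<close>.  Points that \<open>f\<close> maps \<open>\<delta>\<^sub>i/2\<close>-close are therefore mapped
  \<open>\<delta>\<^sub>i\<close>-close by \<open>f\<^sub>i\<close>, hence are \<open>2^-i\<close>-close in \<open>X\<close>: \<open>f\<^sup>-\<^sup>1\<close> is uniformly
  continuous and \<open>f\<close> is an embedding.\<close>

lemma geometric_steps_convergent: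
  fixes a :: "nat \<Rightarrow> 'b::complete_space"
  assumes steps: "\<And>k. i \<le> k \<Longrightarrow> dist (a (Suc k)) (a k) \<le> B * (1/2)^k"
  shows "convergent a" and "\<And>n. i \<le> n \<Longrightarrow> dist (lim a) (a n) \<le> 2 * B * (1/2)^n"
proof -
  have "0 \<le> B * (1/2)^i"
    using steps[of i] zero_le_dist[of "a (Suc i)" "a i"] by linarith
  then have "0 \<le> B"
    by (simp add: zero_le_mult_iff power_le_zero_eq)
  have telescope: "dist (a m) (a n) \<le> 2 * B * (1/2)^n - 2 * B * (1/2)^m"
    if "i \<le> n" "n \<le> m" for m n
    using \<open>n \<le> m\<close>
  proof (induction m rule: dec_induct)
    case (step m)
    have "dist (a (Suc m)) (a n) \<le> dist (a (Suc m)) (a m) + dist (a m) (a n)"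
      by (rule dist_triangle)
    also have "\<dots> \<le> B * (1/2)^m + (2 * B * (1/2)^n - 2 * B * (1/2)^m)"
      using steps[of m] step \<open>i \<le> n\<close> by (intro add_mono) auto
    finally show ?case by simp
  qed simp
  have tail: "dist (a m) (a n) \<le> 2 * B * (1/2)^n" if "i \<le> n" "n \<le> m" for m n
  proof -
    have "0 \<le> 2 * B * (1/2::real)^m"
      using \<open>0 \<le> B\<close> by simp
    then show ?thesis
      using telescope[OF that] by linarith
  qed
  have "(\<lambda>n. 2 * B * (1/2::real)^n) \<longlonglongrightarrow> 0"
    by (intro tendsto_mult_right_zero LIMSEQ_power_zero) simp
  have "Cauchy a"
  proof (rule metric_CauchyI)
    fix e :: real assume "e > 0"
    then obtain N where N: "\<And>n. N \<le> n \<Longrightarrow> 2 * B * (1/2)^n < e"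
      using order_tendstoD(2)[OF \<open>_ \<longlonglongrightarrow> 0\<close>] by (auto simp: eventually_sequentially)
    have "dist (a m) (a n) < e" if "max N i \<le> n" "n \<le> m" for m n
      using tail[of n m] N[of n] that by simp
    then show "\<exists>M. \<forall>m\<ge>M. \<forall>n\<ge>M. dist (a m) (a n) < e"
      by (metis dist_commute nle_le)
  qed
  then show "convergent a" by (rule Cauchy_convergent)
  then have "(\<lambda>m. dist (a m) (a n)) \<longlonglongrightarrow> dist (lim a) (a n)" for n
    by (intro tendsto_intros) (simp add: convergent_LIMSEQ_iff)
  then show "dist (lim a) (a n) \<le> 2 * B * (1/2)^n" if "i \<le> n" for n
    by (rule LIMSEQ_le_const2) (use tail that in blast)
qed

lemma embedding_on_imp_inj_on: "embedding_on S f \<Longrightarrow> inj_on f S"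
  unfolding embedding_on_def homeomorphism_def inj_on_def by metis

lemma embedding_on_imp_continuous_on: "embedding_on S f \<Longrightarrow> continuous_on S f"
  unfolding embedding_on_def homeomorphism_def by blast

definition inv_uniformly_continuous_on :: "'a::metric_space set \<Rightarrow> ('a \<Rightarrow> 'b::metric_space) \<Rightarrow> bool" where
  "inv_uniformly_continuous_on X F \<longleftrightarrow>
     (\<forall>e>0. \<exists>d>0. \<forall>x\<in>X. \<forall>x'\<in>X. dist (F x) (F x') < d \<longrightarrow> dist x x' < e)"

lemma inv_uniformly_continuous_on_imp_inj_on:
  assumes "inv_uniformly_continuous_on X F"
  shows "inj_on F X"
proof (rule inj_onI, rule ccontr)
  fix x x' assume "x \<in> X" "x' \<in> X" "F x = F x'" "x \<noteq> x'"
  then show False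
    using assms unfolding inv_uniformly_continuous_on_def
    by (metis dist_pos_lt dist_self less_irrefl)
qed

lemma inv_uniformly_continuous_on_iff:
  assumes "inj_on F X"
  shows "inv_uniformly_continuous_on X F \<longleftrightarrow> uniformly_continuous_on (F ` X) (inv_into X F)"
  using assms unfolding inv_uniformly_continuous_on_def uniformly_continuous_on_def
  by (simp add: inv_into_f_f dist_commute)

lemma inv_uniformly_continuous_on_compose:
  assumes "inv_uniformly_continuous_on X F" "inv_uniformly_continuous_on (F ` X) G"
  shows "inv_uniformly_continuous_on X (G \<circ> F)"
  unfolding inv_uniformly_continuous_on_def
proof (intro allI impI)
  fix e :: real assume "e > 0"
  then obtain d where "d > 0" and d: "\<forall>x\<in>X. \<forall>x'\<in>X. dist (F x) (F x') < d \<longrightarrow> dist x x' < e"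
    using assms(1) unfolding inv_uniformly_continuous_on_def by blast
  then obtain c where "c > 0" and c: "\<forall>y\<in>F ` X. \<forall>y'\<in>F ` X. dist (G y) (G y') < c \<longrightarrow> dist y y' < d"
    using assms(2) unfolding inv_uniformly_continuous_on_def by blast
  show "\<exists>c>0. \<forall>x\<in>X. \<forall>x'\<in>X. dist ((G \<circ> F) x) ((G \<circ> F) x') < c \<longrightarrow> dist x x' < e"
    using \<open>c > 0\<close> c d by auto
qed

lemma embedding_on_if_inv_uniformly_continuous_on:
  assumes "continuous_on X F" "inv_uniformly_continuous_on X F"
  shows "embedding_on X F"
proof -
  have "inj_on F X"
    using assms(2) by (rule inv_uniformly_continuous_on_imp_inj_on)
  then have "continuous_on (F ` X) (inv_into X F)"
    using assms(2) inv_uniformly_continuous_on_iff uniformly_continuous_imp_continuous by blast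
  then have "homeomorphism X (F ` X) F (inv_into X F)"
    using assms(1) \<open>inj_on F X\<close> unfolding homeomorphism_def
    by (auto simp: inv_into_f_f f_inv_into_f inv_into_into image_iff)
  then show ?thesis
    unfolding embedding_on_def by blast
qed

lemma inv_uniformly_continuous_on_if_approximable:
  assumes approx: "\<And>e. e > 0 \<Longrightarrow> \<exists>G d. d > 0
       \<and> (\<forall>x\<in>X. \<forall>x'\<in>X. dist (G x) (G x') < d \<longrightarrow> dist x x' < e)
       \<and> (\<forall>x\<in>X. dist (f x) (G x) \<le> d / 4)"
  shows "inv_uniformly_continuous_on X f"
  unfolding inv_uniformly_continuous_on_def
proof (intro allI impI)
  fix e :: real assume "e > 0"
  then obtain G d where "d > 0"
    and G: "\<forall>x\<in>X. \<forall>x'\<in>X. dist (G x) (G x') < d \<longrightarrow> dist x x' < e"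
    and close: "\<forall>x\<in>X. dist (f x) (G x) \<le> d / 4"
    using approx by blast
  have "dist x x' < e" if "x \<in> X" "x' \<in> X" "dist (f x) (f x') < d / 2" for x x'
  proof -
    have "dist (G x) (G x') \<le> dist (f x) (G x) + dist (f x) (f x') + dist (f x') (G x')"
      by (metis add.commute add_le_cancel_left dist_commute dist_triangle dist_triangle_le)
    then have "dist (G x) (G x') < d"
      using close[rule_format, OF that(1)] close[rule_format, OF that(2)] that(3) by linarith
    then show ?thesis
      using G that by blast
  qed
  then show "\<exists>d>0. \<forall>x\<in>X. \<forall>x'\<in>X. dist (f x) (f x') < d \<longrightarrow> dist x x' < e"
    using \<open>d > 0\<close> by (intro exI[of _ "d / 2"]) auto
qed

text \<open>The value \<open>1\<close> is junk, used only when no modulus exists.\<close>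
definition inv_modulus :: "'a::metric_space set \<Rightarrow> ('a \<Rightarrow> 'b::metric_space) \<Rightarrow> real \<Rightarrow> real" where
  "inv_modulus X F e =
     (if \<exists>d>0. \<forall>x\<in>X. \<forall>x'\<in>X. dist (F x) (F x') < d \<longrightarrow> dist x x' < e
      then SOME d. d > 0 \<and> (\<forall>x\<in>X. \<forall>x'\<in>X. dist (F x) (F x') < d \<longrightarrow> dist x x' < e)
      else 1)"

lemma inv_modulus_spec:
  assumes "\<exists>d>0. \<forall>x\<in>X. \<forall>x'\<in>X. dist (F x) (F x') < d \<longrightarrow> dist x x' < e"
  shows "inv_modulus X F e > 0
    \<and> (\<forall>x\<in>X. \<forall>x'\<in>X. dist (F x) (F x') < inv_modulus X F e \<longrightarrow> dist x x' < e)"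
  unfolding inv_modulus_def if_P[OF assms] by (rule someI_ex[OF assms])

lemma inv_modulus_pos: "inv_modulus X F e > 0"
  using inv_modulus_spec[of X F e] by (cases "\<exists>d>0. \<forall>x\<in>X. \<forall>x'\<in>X. dist (F x) (F x') < d \<longrightarrow> dist x x' < e")
    (auto simp: inv_modulus_def)

lemma inv_modulus:
  assumes "inv_uniformly_continuous_on X F" "e > 0" "x \<in> X" "x' \<in> X"
    and "dist (F x) (F x') < inv_modulus X F e"
  shows "dist x x' < e"
  using inv_modulus_spec[of X F e] assms unfolding inv_uniformly_continuous_on_def by blast

lemma inv_modulus_cong:
  assumes "\<And>x. x \<in> X \<Longrightarrow> F x = G x"
  shows "inv_modulus X F e = inv_modulus X G e"
proof -
  have "(\<forall>x\<in>X. \<forall>x'\<in>X. dist (F x) (F x') < d \<longrightarrow> dist x x' < e)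
      \<longleftrightarrow> (\<forall>x\<in>X. \<forall>x'\<in>X. dist (G x) (G x') < d \<longrightarrow> dist x x' < e)" for d
    using assms by auto
  then show ?thesis
    by (simp only: inv_modulus_def)
qed

definition stage_of_history :: "('a \<Rightarrow> 'b) \<Rightarrow> ('b \<Rightarrow> 'b) list \<Rightarrow> 'a \<Rightarrow> 'b" where
  "stage_of_history f0 hs = foldl (\<lambda>F h. h \<circ> F) f0 hs"

definition epsilon_strategy :: "'a::metric_space set \<Rightarrow> ('a \<Rightarrow> 'b::metric_space) \<Rightarrow> ('b \<Rightarrow> 'b) list \<Rightarrow> real" where
  "epsilon_strategy X f0 hs =
     Min ((\<lambda>i. inv_modulus X (stage_of_history f0 (take i hs)) ((1/2)^i) / 2^(length hs - i + 3))
          ` {0..length hs})"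

lemma epsilon_strategy_pos: "epsilon_strategy X f0 hs > 0"
  unfolding epsilon_strategy_def by (subst Min_gr_iff) (auto intro!: divide_pos_pos inv_modulus_pos)

lemma epsilon_strategy_le:
  "i \<le> length hs \<Longrightarrow>
   epsilon_strategy X f0 hs \<le> inv_modulus X (stage_of_history f0 (take i hs)) ((1/2)^i) / 2^(length hs - i + 3)"
  unfolding epsilon_strategy_def by (rule Min_le) auto

lemma length_history [simp]: "length (history X f0 g k) = k"
  by (simp add: history_def)

lemma take_history: "i \<le> k \<Longrightarrow> take i (history X f0 g k) = history X f0 g i"
  by (simp add: history_def take_map min_def)

lemma stage_of_history_history: "x \<in> X \<Longrightarrow> stage_of_history f0 (history X f0 g k) x = stage f0 g k x"
  by (induction k) (simp_all add: history_def stage_of_history_def)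

lemma legal_playD:
  assumes "legal_play X f0 \<sigma> g"
  shows "embedding_on (stage f0 g k ` X) (g k)"
    and "\<And>x. x \<in> X \<Longrightarrow> dist (stage f0 g (Suc k) x) (stage f0 g k x) < \<sigma> (history X f0 g k)"
    and "uniformly_continuous_on (g k ` stage f0 g k ` X) (inv_into (stage f0 g k ` X) (g k))"
  using assms unfolding legal_play_def Let_def by auto

context
  fixes X :: "'a::metric_space set" and f0 :: "'a \<Rightarrow> 'b::metric_space"
    and \<sigma> :: "('b \<Rightarrow> 'b) list \<Rightarrow> real" and g :: "nat \<Rightarrow> 'b \<Rightarrow> 'b"
  assumes emb: "embedding_on X f0"
    and uc: "uniformly_continuous_on (f0 ` X) (inv_into X f0)"
    and legal: "legal_play X f0 \<sigma> g"
begin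

lemma continuous_on_stage: "continuous_on X (stage f0 g k)"
proof (induction k)
  case 0
  show ?case using emb by (simp add: embedding_on_imp_continuous_on)
next
  case (Suc k)
  have "continuous_on (stage f0 g k ` X) (g k)"
    using legal_playD(1)[OF legal] by (rule embedding_on_imp_continuous_on)
  then show ?case
    using continuous_on_compose[OF Suc] by simp
qed

lemma inv_uniformly_continuous_on_stage: "inv_uniformly_continuous_on X (stage f0 g k)"
proof (induction k)
  case 0
  show ?case
    using emb uc by (simp add: inv_uniformly_continuous_on_iff embedding_on_imp_inj_on)
next
  case (Suc k)
  have "inv_uniformly_continuous_on (stage f0 g k ` X) (g k)"
    using legal_playD[OF legal]
    by (simp add: inv_uniformly_continuous_on_iff embedding_on_imp_inj_on)
  then show ?case
    unfolding stage.simps by (rule inv_uniformly_continuous_on_compose[OF Suc])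
qed

end

context
  fixes X :: "'a::metric_space set" and f0 :: "'a \<Rightarrow> 'b::complete_space" and g :: "nat \<Rightarrow> 'b \<Rightarrow> 'b"
  assumes emb: "embedding_on X f0"
    and uc: "uniformly_continuous_on (f0 ` X) (inv_into X f0)"
    and legal: "legal_play X f0 (epsilon_strategy X f0) g"
begin

lemma stage_step_le:
  assumes "x \<in> X" "i \<le> k"
  shows "dist (stage f0 g (Suc k) x) (stage f0 g k x)
           \<le> inv_modulus X (stage f0 g i) ((1/2)^i) * 2^i / 8 * (1/2)^k"
proof -
  have "dist (stage f0 g (Suc k) x) (stage f0 g k x) < epsilon_strategy X f0 (history X f0 g k)"
    using legal_playD(2)[OF legal assms(1)] .
  also have "\<dots> \<le> inv_modulus X (stage_of_history f0 (history X f0 g i)) ((1/2)^i) / 2^(k - i + 3)"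
    using epsilon_strategy_le[of i "history X f0 g k"] assms(2) by (simp add: take_history)
  also have "\<dots> = inv_modulus X (stage f0 g i) ((1/2)^i) / 2^(k - i + 3)"
    using inv_modulus_cong[of X "stage_of_history f0 (history X f0 g i)" "stage f0 g i"]
    by (simp add: stage_of_history_history)
  also have "(2::real)^(k - i + 3) = 8 * 2^k / 2^i"
    using assms(2) by (simp add: power_diff power_add)
  finally show ?thesis
    by (simp add: power_one_over)
qed

lemma stage_convergent: "x \<in> X \<Longrightarrow> convergent (\<lambda>k. stage f0 g k x)"
  by (rule geometric_steps_convergent(1)[of 0 _ "inv_modulus X (stage f0 g 0) ((1/2)^0) * 2^0 / 8"])
    (rule stage_step_le)

lemma dist_lim_stage_le:
  assumes "x \<in> X" "i \<le> n"
  shows "dist (lim (\<lambda>k. stage f0 g k x)) (stage f0 g n x)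
           \<le> inv_modulus X (stage f0 g i) ((1/2)^i) * 2^i / 4 * (1/2)^n"
proof -
  have "dist (lim (\<lambda>k. stage f0 g k x)) (stage f0 g n x)
          \<le> 2 * (inv_modulus X (stage f0 g i) ((1/2)^i) * 2^i / 8) * (1/2)^n"
    by (rule geometric_steps_convergent(2)) (rule stage_step_le, use assms in auto)
  then show ?thesis
    by (simp add: mult_ac)
qed

lemma player_I_wins_epsilon_strategy: "player_I_wins X f0 g"
proof -
  define f where "f x = lim (\<lambda>k. stage f0 g k x)" for x
  have "uniform_limit X (stage f0 g) f sequentially"
  proof (rule uniform_limitI)
    fix e :: real assume "e > 0"
    let ?\<delta>\<^sub>0 = "inv_modulus X (stage f0 g 0) 1"
    have "(\<lambda>n. ?\<delta>\<^sub>0 / 4 * (1/2::real)^n) \<longlonglongrightarrow> 0"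
      by (intro tendsto_mult_right_zero LIMSEQ_power_zero) simp
    then have "\<forall>\<^sub>F n in sequentially. ?\<delta>\<^sub>0 / 4 * (1/2)^n < e"
      using \<open>e > 0\<close> by (rule order_tendstoD)
    then show "\<forall>\<^sub>F n in sequentially. \<forall>x\<in>X. dist (stage f0 g n x) (f x) < e"
    proof (rule eventually_mono, intro ballI)
      fix n x assume "?\<delta>\<^sub>0 / 4 * (1/2)^n < e" "x \<in> X"
      then show "dist (stage f0 g n x) (f x) < e"
        using dist_lim_stage_le[of x 0 n] by (simp add: f_def dist_commute)
    qed
  qed
  then have "continuous_on X f"
    using continuous_on_stage[OF emb uc legal] by (intro uniform_limit_theorem) auto
  moreover have "inv_uniformly_continuous_on X f"
  proof (rule inv_uniformly_continuous_on_if_approximable)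
    fix e :: real assume "e > 0"
    then obtain i where "(1/2::real)^i < e"
      using real_arch_pow_inv[of e "1/2"] by auto
    let ?\<delta> = "inv_modulus X (stage f0 g i) ((1/2)^i)"
    have "\<forall>x\<in>X. \<forall>x'\<in>X. dist (stage f0 g i x) (stage f0 g i x') < ?\<delta> \<longrightarrow> dist x x' < e"
      using inv_modulus[OF inv_uniformly_continuous_on_stage[OF emb uc legal], of "(1/2)^i"]
        \<open>(1/2)^i < e\<close> by force
    moreover have "\<forall>x\<in>X. dist (f x) (stage f0 g i x) \<le> ?\<delta> / 4"
      using dist_lim_stage_le[of _ i i] by (simp add: f_def power_one_over)
    ultimately show "\<exists>G d. d > 0 \<and> (\<forall>x\<in>X. \<forall>x'\<in>X. dist (G x) (G x') < d \<longrightarrow> dist x x' < e)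
                       \<and> (\<forall>x\<in>X. dist (f x) (G x) \<le> d / 4)"
      using inv_modulus_pos by blast
  qed
  ultimately have "embedding_on X f"
    by (rule embedding_on_if_inv_uniformly_continuous_on)
  moreover have "(\<lambda>k. stage f0 g k x) \<longlonglongrightarrow> f x" if "x \<in> X" for x
    using stage_convergent[OF that] by (simp add: f_def convergent_LIMSEQ_iff)
  ultimately show ?thesis
    unfolding player_I_wins_def by blast
qed

end

theorem theorem3p1:
  fixes X :: "'a::metric_space set" and f0 :: "'a \<Rightarrow> 'b::complete_space"
  assumes "embedding_on X f0"
    and "uniformly_continuous_on (f0 ` X) (inv_into X f0)"
  shows "\<exists>\<sigma> :: ('b \<Rightarrow> 'b) list \<Rightarrow> real.
           (\<forall>h. \<sigma> h > 0) \<and> (\<forall>g. legal_play X f0 \<sigma> g \<longrightarrow> player_I_wins X f0 g)"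
  using player_I_wins_epsilon_strategy[OF assms] epsilon_strategy_pos by blast

end
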